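(* Let $G$ be a cocomparability graph and $P$ a partial order whose comparability graph is $\overline{G}$. Let $\widetilde G=\widehat C(P)$, let $H$ be the associated split graph of $\widetilde G$ and $H^*$ the conflict graph of $H$. If $\widetilde G$ is linear-interval coverable, then $\chi(H^* )\le 2$.
   Context: For $P$ on $U=\{u_1,\dots,u_n\}$ and a copy $V=\{v_1,\dots,v_n\}$, $\widehat C(P)=(U,V,\widetilde E)$ is the bipartite graph with $u_iv_j\in\widetilde E$ iff NOT $u_i<_Pu_j$. The associated split graph $H$ of a bipartite graph $(U,V,F)$ has vertex set $U\cup V$ and edge set $F$ together with all pairs of distinct vertices of $V$. Two edges $e,e'$ of a graph are in conflict if there are vertices $w_1,\dots,w_4$ (not necessarily distinct) with $e=w_2w_3$, $e'=w_4w_1$ edges and $w_1w_2$, $w_3w_4$ non-edges; the conflict graph $H^*$ has the edges of $H$ as vertices, adjacent iff in conflict. $\chi$ is the chromatic number. A bipartite graph $(U,V,F)$ with $E_0=\{u_iv_i\}\subseteq F$ is linear-interval coverable if $F=E_1\cup E_2$ where $(U,V,E_1),(U,V,E_2)$ are chain graphs (bipartite graphs whose neighborhoods in each color class are totally ordered by inclusion) and $E_0\subseteq E_2\setminus E_1$. *)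

theory Defs
  imports Main
begin

(* Elements of U = {u_0,...,u_(n-1)} are represented by indices 0..<n.
   Vertices of the split graph: Inl i = u_i, Inr j = v_j. *)

definition strict_po_on :: "nat \<Rightarrow> (nat \<Rightarrow> nat \<Rightarrow> bool) \<Rightarrow> bool" where
  "strict_po_on n lt \<longleftrightarrow>
     (\<forall>i<n. \<not> lt i i) \<and>
     (\<forall>i<n. \<forall>j<n. \<forall>k<n. lt i j \<and> lt j k \<longrightarrow> lt i k)"

definition complement_is_comparability ::
  "nat \<Rightarrow> (nat \<Rightarrow> nat \<Rightarrow> bool) \<Rightarrow> (nat \<Rightarrow> nat \<Rightarrow> bool) \<Rightarrow> bool" where
  "complement_is_comparability n G lt \<longleftrightarrow>
     (\<forall>i<n. \<not> G i i) \<and> (\<forall>i<n. \<forall>j<n. G i j \<longleftrightarrow> G j i) \<and>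
     (\<forall>i<n. \<forall>j<n. i \<noteq> j \<longrightarrow> (\<not> G i j \<longleftrightarrow> (lt i j \<or> lt j i)))"

(* hat-C(P): edge u_i v_j iff not u_i <_P u_j; edges as index pairs (i,j) *)
definition hatC :: "nat \<Rightarrow> (nat \<Rightarrow> nat \<Rightarrow> bool) \<Rightarrow> (nat \<times> nat) set" where
  "hatC n lt = {(i, j). i < n \<and> j < n \<and> \<not> lt i j}"

definition chain_graph :: "nat \<Rightarrow> (nat \<times> nat) set \<Rightarrow> bool" where
  "chain_graph n E \<longleftrightarrow>
     E \<subseteq> {0..<n} \<times> {0..<n} \<and>
     (\<forall>i<n. \<forall>i'<n. {j. (i, j) \<in> E} \<subseteq> {j. (i', j) \<in> E} \<or> {j. (i', j) \<in> E} \<subseteq> {j. (i, j) \<in> E}) \<and>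
     (\<forall>j<n. \<forall>j'<n. {i. (i, j) \<in> E} \<subseteq> {i. (i, j') \<in> E} \<or> {i. (i, j') \<in> E} \<subseteq> {i. (i, j) \<in> E})"

definition diag_edges :: "nat \<Rightarrow> (nat \<times> nat) set" where
  "diag_edges n = {(i, i) | i. i < n}"

definition linear_interval_coverable :: "nat \<Rightarrow> (nat \<times> nat) set \<Rightarrow> bool" where
  "linear_interval_coverable n F \<longleftrightarrow>
     diag_edges n \<subseteq> F \<and>
     (\<exists>E1 E2. chain_graph n E1 \<and> chain_graph n E2 \<and> F = E1 \<union> E2 \<and>
              diag_edges n \<subseteq> E2 - E1)"

definition split_vertices :: "nat \<Rightarrow> (nat + nat) set" where
  "split_vertices n = Inl ` {0..<n} \<union> Inr ` {0..<n}"

definition split_edges :: "nat \<Rightarrow> (nat \<times> nat) set \<Rightarrow> (nat + nat) set set" where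
  "split_edges n F =
     {{Inl i, Inr j} | i j. (i, j) \<in> F} \<union>
     {{Inr j, Inr k} | j k. j < n \<and> k < n \<and> j \<noteq> k}"

definition in_conflict :: "'a set \<Rightarrow> 'a set set \<Rightarrow> 'a set \<Rightarrow> 'a set \<Rightarrow> bool" where
  "in_conflict V Ed e e' \<longleftrightarrow>
     e \<in> Ed \<and> e' \<in> Ed \<and>
     (\<exists>w1\<in>V. \<exists>w2\<in>V. \<exists>w3\<in>V. \<exists>w4\<in>V.
        e = {w2, w3} \<and> e' = {w4, w1} \<and>
        w1 \<noteq> w2 \<and> {w1, w2} \<notin> Ed \<and> w3 \<noteq> w4 \<and> {w3, w4} \<notin> Ed)"

definition colorable :: "'b set \<Rightarrow> ('b \<Rightarrow> 'b \<Rightarrow> bool) \<Rightarrow> nat \<Rightarrow> bool" where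
  "colorable V adj k \<longleftrightarrow>
     (\<exists>c. (\<forall>x\<in>V. c x < k) \<and> (\<forall>x\<in>V. \<forall>y\<in>V. adj x y \<longrightarrow> c x \<noteq> c y))"

definition chromatic_number :: "'b set \<Rightarrow> ('b \<Rightarrow> 'b \<Rightarrow> bool) \<Rightarrow> nat" where
  "chromatic_number V adj = (LEAST k. colorable V adj k)"

end

theory Submission
  imports Defs
begin

text \<open>In the split graph every non-edge contains a vertex of U, so two edges in conflict must
  both join U to V and form an induced 2K2 of the bipartite graph F. A chain graph contains no
  induced 2K2, so in a cover F = E1 \<union> E2 by chain graphs two conflicting edges never lie in the
  same E_k: colouring an edge by whether it belongs to E1 is a proper 2-colouring of the
  conflict graph.\<close>

lemma Inl_Inl_notin_split_edges: "{Inl i, Inl k} \<notin> split_edges n F"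
  unfolding split_edges_def by (auto simp: doubleton_eq_iff)

lemma Inl_Inr_in_split_edges_iff: "{Inl i, Inr j} \<in> split_edges n F \<longleftrightarrow> (i, j) \<in> F"
  unfolding split_edges_def by (auto simp: doubleton_eq_iff)

lemma split_vertices_cases:
  assumes "w \<in> split_vertices n"
  obtains i where "w = Inl i" "i < n" | j where "w = Inr j" "j < n"
  using assms unfolding split_vertices_def by auto

lemma split_non_edge_has_Inl:
  assumes "w \<in> split_vertices n" "w' \<in> split_vertices n" "w \<noteq> w'"
    and "{w, w'} \<notin> split_edges n F"
  shows "isl w \<or> isl w'"
  using assms unfolding split_edges_def
  by (auto elim!: split_vertices_cases)

lemma split_edge_at_Inl:
  assumes "{Inl i, w} \<in> split_edges n F"
  obtains j where "w = Inr j" "(i, j) \<in> F"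
  using assms Inl_Inl_notin_split_edges Inl_Inr_in_split_edges_iff
  by (cases w) auto

lemma in_conflict_split_edges:
  assumes "in_conflict (split_vertices n) (split_edges n F) e e'"
  obtains i j a b where "e = {Inl i, Inr j}" "e' = {Inl a, Inr b}"
    "(i, j) \<in> F" "(a, b) \<in> F" "(i, b) \<notin> F" "(a, j) \<notin> F"
proof -
  obtain w1 w2 w3 w4 where
    V: "w1 \<in> split_vertices n" "w2 \<in> split_vertices n"
       "w3 \<in> split_vertices n" "w4 \<in> split_vertices n" and
    e: "e = {w2, w3}" "e \<in> split_edges n F" and
    e': "e' = {w4, w1}" "e' \<in> split_edges n F" and
    non12: "w1 \<noteq> w2" "{w1, w2} \<notin> split_edges n F" and
    non34: "w3 \<noteq> w4" "{w3, w4} \<notin> split_edges n F"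
    using assms unfolding in_conflict_def by blast
  have isl12: "isl w1 \<or> isl w2" and isl34: "isl w3 \<or> isl w4"
    using split_non_edge_has_Inl V non12 non34 by blast+
  show thesis
  proof (cases "isl w2")
    case True
    then obtain i where w2: "w2 = Inl i" by (cases w2) auto
    with e obtain j where w3: "w3 = Inr j" and ij: "(i, j) \<in> F"
      by (auto elim: split_edge_at_Inl)
    with isl34 obtain a where w4: "w4 = Inl a" by (cases w4) auto
    with e' obtain b where w1: "w1 = Inr b" and ab: "(a, b) \<in> F"
      by (auto elim: split_edge_at_Inl)
    from non12 non34 have "(i, b) \<notin> F" "(a, j) \<notin> F"
      unfolding w1 w2 w3 w4 by (auto simp: insert_commute Inl_Inr_in_split_edges_iff)
    with ij ab show thesis using that e e' w1 w2 w3 w4 by blast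
  next
    case False
    with isl12 obtain a where w1: "w1 = Inl a" by (cases w1) auto
    from e' have "{Inl a, w4} \<in> split_edges n F" by (simp add: w1 insert_commute)
    then obtain b where w4: "w4 = Inr b" and ab: "(a, b) \<in> F" by (rule split_edge_at_Inl)
    with isl34 obtain i where w3: "w3 = Inl i" by (cases w3) auto
    from e have "{Inl i, w2} \<in> split_edges n F" by (simp add: w3 insert_commute)
    then obtain j where w2: "w2 = Inr j" and ij: "(i, j) \<in> F" by (rule split_edge_at_Inl)
    from non12 non34 have "(i, b) \<notin> F" "(a, j) \<notin> F"
      unfolding w1 w2 w3 w4 by (auto simp: insert_commute Inl_Inr_in_split_edges_iff)
    with ij ab show thesis using that e e' w1 w2 w3 w4 by (blast intro: insert_commute)
  qed
qed

lemma chain_graph_no_induced_2K2: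
  assumes "chain_graph n E" "E \<subseteq> F" "(i, j) \<in> E" "(a, b) \<in> E"
  shows "(i, b) \<in> F \<or> (a, j) \<in> F"
proof -
  have "i < n" "a < n"
    using assms(1,3,4) unfolding chain_graph_def by auto
  then have "{j. (i, j) \<in> E} \<subseteq> {j. (a, j) \<in> E} \<or> {j. (a, j) \<in> E} \<subseteq> {j. (i, j) \<in> E}"
    using assms(1) unfolding chain_graph_def by blast
  then show ?thesis using assms(2-4) by blast
qed

lemma conflict_graph_colorable_of_chain_cover:
  assumes "chain_graph n E1" "chain_graph n E2" "F = E1 \<union> E2"
  shows "colorable (split_edges n F) (in_conflict (split_vertices n) (split_edges n F)) 2"
proof -
  define c where "c e = (if \<exists>i j. e = {Inl i, Inr j} \<and> (i, j) \<in> E1 then 0 else 1 :: nat)" for e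
  have c_edge: "c {Inl i, Inr j} = (if (i, j) \<in> E1 then 0 else 1)" for i j
    unfolding c_def by (auto simp: doubleton_eq_iff)
  have "c e \<noteq> c e'" if conflict: "in_conflict (split_vertices n) (split_edges n F) e e'" for e e'
  proof
    assume same: "c e = c e'"
    obtain i j a b where e: "e = {Inl i, Inr j}" "e' = {Inl a, Inr b}"
      and F: "(i, j) \<in> F" "(a, b) \<in> F" "(i, b) \<notin> F" "(a, j) \<notin> F"
      using in_conflict_split_edges[OF conflict] by blast
    from same have "(i, j) \<in> E1 \<longleftrightarrow> (a, b) \<in> E1"
      unfolding e c_edge by (simp split: if_splits)
    then show False
      using chain_graph_no_induced_2K2[OF assms(1), of F i j a b]
            chain_graph_no_induced_2K2[OF assms(2), of F i j a b] F assms(3)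
      by blast
  qed
  then show ?thesis
    unfolding colorable_def by (intro exI[of _ c]) (auto simp: c_def)
qed

lemma chromatic_number_le: "colorable V adj k \<Longrightarrow> chromatic_number V adj \<le> k"
  unfolding chromatic_number_def by (rule Least_le)

theorem lemma11:
  fixes n :: nat and G lt :: "nat \<Rightarrow> nat \<Rightarrow> bool"
  assumes "strict_po_on n lt"
    and "complement_is_comparability n G lt"
    and "linear_interval_coverable n (hatC n lt)"
  shows "chromatic_number (split_edges n (hatC n lt))
           (in_conflict (split_vertices n) (split_edges n (hatC n lt))) \<le> 2"
proof -
  obtain E1 E2 where "chain_graph n E1" "chain_graph n E2" "hatC n lt = E1 \<union> E2"
    using assms(3) unfolding linear_interval_coverable_def by blast
  then show ?thesis
    by (intro chromatic_number_le conflict_graph_colorable_of_chain_cover)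
qed

end
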